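(* Let $\mathcal{G}$ be a network of type $\mathcal{C}^1$ with exactly two stubborn agents $s_1,s_2$, whose opinions evolve by the Friedkin–Johnsen model $\mathbf{x}(k+1)=(I-\beta)W\mathbf{x}(k)+\beta\mathbf{x}(0)$, let $m$ be a global communicator, and let $\mathcal{T}_1,\dots,\mathcal{T}_4$ be defined relative to $m$. Let $(a,b,d)$ be a permissible non-redundant edge modification. (A) The modification increases the influence centrality $c_{s_1}$ if either C1: $a$ satisfies (i) $a\in\mathcal{T}_1$ and (ii) every simple path from $m$ to $a$ passes through $s_1$, while $d$ fails (i) or (ii) (or both) (i.e. $d\notin\mathcal{T}_1$, or some simple path from $m$ to $d$ avoids $s_1$); or C2: $a\in\mathcal{T}_4$ and $d\in\mathcal{T}_2$. (B) Symmetrically, the modification increases $c_{s_2}$ if either C1: $a\in\mathcal{T}_2$ and every simple path from $m$ to $a$ passes through $s_2$, while $d$ fails at least one of these two conditions (with $s_2,\mathcal{T}_2$ in place of $s_1,\mathcal{T}_1$); or C2: $a\in\mathcal{T}_4$ and $d\in\mathcal{T}_1$.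
   Context: Let $\mathcal{G}=(\mathcal{V},\mathcal{E})$, $\mathcal{V}=\{1,\dots,n\}$, be a directed graph, where an edge $(i,j)$ means information flows from $i$ to $j$. Its weighted adjacency matrix $W=[w_{ij}]$ is row-stochastic with $w_{ij}>0$ iff $(j,i)\in\mathcal{E}$ (self-loops allowed). In the Friedkin–Johnsen model, $\beta=\mathrm{diag}(\beta_1,\dots,\beta_n)$ with $\beta_i\in[0,1]$, and agent $i$ is stubborn if $\beta_i>0$. Here exactly two agents $s_1,s_2$ are stubborn, with $\beta_{s_1},\beta_{s_2}\in(0,1)$. The influence centrality vector is $\mathbf{c}=P^T\mathbb{1}_n/n$ with $P=(I_n-(I_n-\beta)W)^{-1}\beta$; $c_i$ is the influence centrality of agent $i$ (and $c_{s_1}+c_{s_2}=1$). "Increases the influence centrality of $s_i$" means $c_{s_i}$ is strictly larger after the modification. Type $\mathcal{C}^1$: $\mathcal{G}$ is strongly connected and some node $m$ belongs to every cycle of $\mathcal{G}$ other than self-loops; such an $m$ is a global communicator. Given a global communicator $m$, a direct path from $i$ to $j$ is a path from $i$ to $j$ that does not pass through $m$. The nodes are classified as: $\mathcal{T}_1$: nodes having a direct path from $s_1$ but not from $s_2$; $\mathcal{T}_2$: direct path from $s_2$ but not from $s_1$; $\mathcal{T}_3$: direct paths from both; $\mathcal{T}_4$: from neither. By convention $s_1\in\mathcal{T}_1$, $s_2\in\mathcal{T}_2$, $m\in\mathcal{T}_3$, except that if $s_1$ has a direct path to $s_2$ then $s_2$ and every node with a direct path from $s_2$ belong to $\mathcal{T}_3$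 (so $\mathcal{T}_2=\emptyset$). Edge modification $(a,b,d)$: for distinct nodes $a,b,d$ with $w_{bd}>0$ and some $0<w<w_{bd}$, replace $w_{ba}$ by $w_{ba}+w$ (adding edge $(a,b)$ if absent) and $w_{bd}$ by $w_{bd}-w$, so the in-degree (row sum) of $b$ is unchanged. It is permissible if the modified network is still of type $\mathcal{C}^1$. It is redundant if it changes the influence centrality of neither stubborn agent, and non-redundant otherwise. *)

theory Defs
  imports "HOL-Analysis.Analysis"
begin

text \<open>Nodes are the elements of a finite type 'n; W $ i $ j is the weight w_ij.
  An edge (i,j) (information flows from i to j) exists iff w_ji > 0.\<close>

definition row_stochastic :: "real^'n^'n \<Rightarrow> bool" where
  "row_stochastic W \<longleftrightarrow> (\<forall>i j. W $ i $ j \<ge> 0) \<and> (\<forall>i. (\<Sum>j\<in>UNIV. W $ i $ j) = 1)"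

definition edge :: "real^'n^'n \<Rightarrow> 'n \<Rightarrow> 'n \<Rightarrow> bool" where
  "edge W i j \<longleftrightarrow> W $ j $ i > 0"

definition is_walk :: "real^'n^'n \<Rightarrow> 'n list \<Rightarrow> bool" where
  "is_walk W xs \<longleftrightarrow> xs \<noteq> [] \<and> (\<forall>k. Suc k < length xs \<longrightarrow> edge W (xs ! k) (xs ! Suc k))"

definition simple_path :: "real^'n^'n \<Rightarrow> 'n \<Rightarrow> 'n \<Rightarrow> 'n list \<Rightarrow> bool" where
  "simple_path W i j xs \<longleftrightarrow> is_walk W xs \<and> distinct xs \<and> hd xs = i \<and> last xs = j"

definition nontrivial_cycle :: "real^'n^'n \<Rightarrow> 'n list \<Rightarrow> bool" where
  "nontrivial_cycle W xs \<longleftrightarrow> is_walk W xs \<and> distinct xs \<and> length xs \<ge> 2 \<and> edge W (last xs) (hd xs)"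

definition strongly_connected :: "real^'n^'n \<Rightarrow> bool" where
  "strongly_connected W \<longleftrightarrow> (\<forall>i j. (i, j) \<in> {(u, v). edge W u v}\<^sup>*)"

definition global_communicator :: "real^'n^'n \<Rightarrow> 'n \<Rightarrow> bool" where
  "global_communicator W m \<longleftrightarrow> (\<forall>xs. nontrivial_cycle W xs \<longrightarrow> m \<in> set xs)"

definition type_C1 :: "real^'n^'n \<Rightarrow> bool" where
  "type_C1 W \<longleftrightarrow> strongly_connected W \<and> (\<exists>m. global_communicator W m)"

definition direct_path :: "real^'n^'n \<Rightarrow> 'n \<Rightarrow> 'n \<Rightarrow> 'n \<Rightarrow> bool" where
  "direct_path W m i j \<longleftrightarrow> (\<exists>xs. is_walk W xs \<and> hd xs = i \<and> last xs = j \<and> m \<notin> set xs)"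

text \<open>Classes T1..T4 (returned as 1..4), including the conventions.\<close>
definition tclass :: "real^'n^'n \<Rightarrow> 'n \<Rightarrow> 'n \<Rightarrow> 'n \<Rightarrow> 'n \<Rightarrow> nat" where
  "tclass W m s1 s2 j =
     (if j = m then 3
      else if j = s1 then 1
      else if direct_path W m s1 s2 \<and> (j = s2 \<or> direct_path W m s2 j) then 3
      else if j = s2 then 2
      else if direct_path W m s1 j \<and> \<not> direct_path W m s2 j then 1
      else if direct_path W m s2 j \<and> \<not> direct_path W m s1 j then 2
      else if direct_path W m s1 j \<and> direct_path W m s2 j then 3
      else 4)"

definition diagm :: "('n \<Rightarrow> real) \<Rightarrow> real^'n^'n" where
  "diagm \<beta> = (\<chi> i j. if i = j then \<beta> i else 0)"

definition FJ_P :: "('n \<Rightarrow> real) \<Rightarrow> real^'n^'n \<Rightarrow> real^'n^'n" where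
  "FJ_P \<beta> W = matrix_inv (mat 1 - (mat 1 - diagm \<beta>) ** W) ** diagm \<beta>"

definition influence_centrality :: "('n::finite \<Rightarrow> real) \<Rightarrow> real^'n^'n \<Rightarrow> 'n \<Rightarrow> real" where
  "influence_centrality \<beta> W i = (\<Sum>j\<in>UNIV. FJ_P \<beta> W $ j $ i) / real CARD('n)"

definition modify :: "real^'n^'n \<Rightarrow> 'n \<Rightarrow> 'n \<Rightarrow> 'n \<Rightarrow> real \<Rightarrow> real^'n^'n" where
  "modify W a b d w = (\<chi> i j. if i = b \<and> j = a then W $ b $ a + w
                              else if i = b \<and> j = d then W $ b $ d - w
                              else W $ i $ j)"

end

(*
  Column c of P = (I - (I - \<beta>) W)^-1 \<beta> is the unique solution x of
  x_k - (1 - \<beta>_k) (W x)_k = \<beta>_c [k = c]. For a strongly connected row-stochastic W these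
  equations obey a discrete maximum principle. With exactly two stubborn agents the columns of s1
  and s2 add up to 1, so the column x of s1 is subharmonic (x_k \<le> (W x)_k) away from s1 and
  superharmonic away from s2. Hence x is largest at s1 and smallest at s2, and on a set of nodes
  whose only in-neighbour outside the set is u, x is at most x_u if the set avoids s1 and at least
  x_u if it avoids s2. Taking u = m, or u = s1 when every path from m to a passes through s1, turns
  the conditions C1 and C2 into x_d \<le> x_a.

  The modification only changes row b, so the change x' - x of the column solves the modified
  equations with the single source (1 - \<beta>_b) w (x_a - x_d) at b. By the minimum principle it is
  nonnegative and positive at b if x_a > x_d, and it vanishes if x_a = x_d; the latter would leave
  both centralities unchanged, which non-redundancy excludes.
*)

theory Submission
  imports Defs
begin

lemma is_walk_iff_successively: "is_walk W xs \<longleftrightarrow> xs \<noteq> [] \<and> successively (edge W) xs"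
  by (simp add: is_walk_def successively_conv_nth)

lemma direct_path_refl: "m \<noteq> i \<Longrightarrow> direct_path W m i i"
  unfolding direct_path_def by (rule exI[of _ "[i]"]) (simp add: is_walk_def)

lemma not_direct_path_from_avoided: "\<not> direct_path W m m j"
  unfolding direct_path_def is_walk_def by (metis hd_in_set)

lemma direct_path_snoc:
  assumes "direct_path W m i j" and "edge W j k" and "k \<noteq> m"
  shows "direct_path W m i k"
proof -
  obtain xs where xs: "is_walk W xs" "hd xs = i" "last xs = j" "m \<notin> set xs"
    using assms(1) unfolding direct_path_def by blast
  then have "is_walk W (xs @ [k]) \<and> hd (xs @ [k]) = i \<and> last (xs @ [k]) = k \<and> m \<notin> set (xs @ [k])"
    using assms(2,3) by (auto simp: is_walk_iff_successively successively_append_iff)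
  then show ?thesis
    unfolding direct_path_def by blast
qed

lemma walk_imp_distinct_walk:
  assumes "is_walk W xs"
  shows "\<exists>ys. is_walk W ys \<and> distinct ys \<and> hd ys = hd xs \<and> last ys = last xs \<and> set ys \<subseteq> set xs"
  using assms
proof (induction "length xs" arbitrary: xs rule: less_induct)
  case less
  show ?case
  proof (cases "distinct xs")
    case False
    then obtain p y q r where xs: "xs = p @ [y] @ q @ [y] @ r"
      using not_distinct_decomp by blast
    let ?zs = "p @ [y] @ r"
    have "is_walk W ?zs"
      using less.prems unfolding xs
      by (auto simp: is_walk_iff_successively successively_append_iff successively_Cons)
    moreover have "length ?zs < length xs" "hd ?zs = hd xs" "last ?zs = last xs" "set ?zs \<subseteq> set xs"
      unfolding xs by (cases p; cases r; auto)+
    ultimately show ?thesis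
      using less.hyps by (metis order_trans)
  qed (use less.prems in blast)
qed

lemma direct_path_imp_simple_path:
  "direct_path W m i j \<Longrightarrow> \<exists>xs. simple_path W i j xs \<and> m \<notin> set xs"
  unfolding direct_path_def simple_path_def using walk_imp_distinct_walk by blast

lemma row_stochastic_nonneg: "row_stochastic W \<Longrightarrow> 0 \<le> W $ i $ j"
  by (simp add: row_stochastic_def)

lemma row_stochastic_mult_vec_const:
  assumes "row_stochastic W"
  shows "W *v vec c = vec c"
proof -
  have "(\<Sum>j\<in>UNIV. W $ i $ j * c) = c" for i
    using assms unfolding row_stochastic_def by (simp add: sum_distrib_right[symmetric])
  then show ?thesis
    by (simp add: matrix_vector_mult_def vec_eq_iff)
qed

lemma nonneg_mult_vec_mono:
  fixes W :: "real^'n^'m"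
  assumes "\<And>j. 0 \<le> W $ i $ j" and "\<And>j. 0 < W $ i $ j \<Longrightarrow> u $ j \<le> v $ j"
  shows "(W *v u) $ i \<le> (W *v v) $ i"
  unfolding matrix_vector_mult_def vec_lambda_beta
  by (rule sum_mono) (metis assms mult_left_mono order_le_less mult_zero_left)

lemma nonneg_mult_vec_strict_mono:
  fixes W :: "real^'n^'m"
  assumes "\<And>j. 0 \<le> W $ i $ j" and "\<And>j. 0 < W $ i $ j \<Longrightarrow> u $ j \<le> v $ j"
    and "0 < W $ i $ l" and "u $ l < v $ l"
  shows "(W *v u) $ i < (W *v v) $ i"
  unfolding matrix_vector_mult_def vec_lambda_beta
proof (rule sum_strict_mono_ex1)
  show "\<forall>j\<in>UNIV. W $ i $ j * u $ j \<le> W $ i $ j * v $ j"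
    by (metis assms(1,2) mult_left_mono order_le_less mult_zero_left)
  show "\<exists>j\<in>UNIV. W $ i $ j * u $ j < W $ i $ j * v $ j"
    using assms(3,4) by (intro bexI[of _ l]) simp_all
qed auto

lemma row_stochastic_mult_vec_le:
  assumes "row_stochastic W" and "\<And>j. v $ j \<le> c"
  shows "(W *v v) $ i \<le> c"
proof -
  have "(W *v v) $ i \<le> (W *v vec c) $ i"
    by (rule nonneg_mult_vec_mono) (simp_all add: assms row_stochastic_nonneg)
  then show ?thesis
    by (simp add: row_stochastic_mult_vec_const[OF assms(1)])
qed

section \<open>Maximum principles on strongly connected networks\<close>

lemma obtain_vec_argmax:
  fixes v :: "'a::linorder^'n"
  obtains p where "\<And>j. v $ j \<le> v $ p"
proof -
  have "Max (range (($) v)) \<in> range (($) v)"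
    by (intro Max_in) auto
  then obtain p where "v $ p = Max (range (($) v))"
    by (metis rangeE)
  then show ?thesis
    using that[of p] by (simp add: Max_ge)
qed

lemma strongly_connected_edge_into:
  assumes "strongly_connected W" and "i \<in> S" and "j \<notin> S"
  shows "\<exists>k\<in>S. \<exists>l. l \<notin> S \<and> edge W l k"
proof -
  have "(j, i) \<in> {(u, v). edge W u v}\<^sup>*"
    using assms(1) unfolding strongly_connected_def by blast
  then show ?thesis
    using assms(2,3) by (induction rule: rtrancl_induct) blast+
qed

lemma strong_max_principle:
  fixes W :: "real^'n^'n" and v :: "real^'n"
  assumes rs: "row_stochastic W" and sc: "strongly_connected W"
    and max: "\<And>j. v $ j \<le> v $ p"
    and sub: "\<And>k. v $ k = v $ p \<Longrightarrow> v $ k \<le> (W *v v) $ k"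
  shows "v $ j = v $ p"
proof (rule ccontr)
  assume "v $ j \<noteq> v $ p"
  then obtain k l where k: "v $ k = v $ p" and l: "v $ l \<noteq> v $ p" and "edge W l k"
    using strongly_connected_edge_into[OF sc, of p "{k. v $ k = v $ p}" j] by auto
  then have "(W *v v) $ k < (W *v vec (v $ p)) $ k"
    using max by (intro nonneg_mult_vec_strict_mono[of W k _ _ l])
      (simp_all add: row_stochastic_nonneg[OF rs] edge_def order.strict_iff_order)
  also have "\<dots> = v $ p"
    by (simp add: row_stochastic_mult_vec_const[OF rs])
  finally show False
    using sub[OF k] k by simp
qed

lemma max_principle_boundary:
  fixes W :: "real^'n^'n" and v :: "real^'n"
  assumes rs: "row_stochastic W" and sc: "strongly_connected W"
    and "u \<notin> R" and "i \<in> R"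
    and sub: "\<And>k. k \<in> R \<Longrightarrow> v $ k \<le> (W *v v) $ k"
    and boundary: "\<And>k j. k \<in> R \<Longrightarrow> j \<notin> R \<Longrightarrow> 0 < W $ k $ j \<Longrightarrow> v $ j \<le> c"
  shows "v $ i \<le> c"
proof (rule ccontr)
  assume "\<not> v $ i \<le> c"
  \<comment> \<open>Replacing v by c outside R keeps it subharmonic at its maxima, which all lie in R.\<close>
  define v' where "v' = (\<chi> k. if k \<in> R then v $ k else c)"
  obtain p where p: "\<And>j. v' $ j \<le> v' $ p"
    using obtain_vec_argmax[of v'] by blast
  have "c < v' $ p"
    using p[of i] \<open>i \<in> R\<close> \<open>\<not> v $ i \<le> c\<close> by (simp add: v'_def)
  have "v' $ u = v' $ p"
  proof (rule strong_max_principle[OF rs sc p])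
    fix k
    assume "v' $ k = v' $ p"
    then have "k \<in> R"
      using \<open>c < v' $ p\<close> by (auto simp: v'_def split: if_splits)
    then have "v' $ k \<le> (W *v v) $ k"
      using sub by (simp add: v'_def)
    also have "\<dots> \<le> (W *v v') $ k"
      using boundary \<open>k \<in> R\<close>
      by (intro nonneg_mult_vec_mono) (simp_all add: row_stochastic_nonneg[OF rs] v'_def)
    finally show "v' $ k \<le> (W *v v') $ k" .
  qed
  then show False
    using \<open>u \<notin> R\<close> \<open>c < v' $ p\<close> by (simp add: v'_def)
qed

lemma subharmonic_le_source:
  fixes W :: "real^'n^'n" and v :: "real^'n"
  assumes rs: "row_stochastic W" and sc: "strongly_connected W"
    and sub: "\<And>k. k \<noteq> s \<Longrightarrow> v $ k \<le> (W *v v) $ k"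
  shows "v $ j \<le> v $ s"
proof (cases "j = s")
  case False
  show ?thesis
    by (rule max_principle_boundary[OF rs sc, of s "- {s}"]) (use False sub in auto)
qed simp

lemma subharmonic_le_cut:
  fixes W :: "real^'n^'n" and v :: "real^'n"
  assumes rs: "row_stochastic W" and sc: "strongly_connected W"
    and sub: "\<And>k. k \<noteq> s \<Longrightarrow> v $ k \<le> (W *v v) $ k"
    and "i \<noteq> u" and "\<not> direct_path W m s i" and "\<not> direct_path W u m i"
  shows "v $ i \<le> v $ u"
proof -
  define R where "R = {k. k \<noteq> u \<and> \<not> direct_path W m s k \<and> \<not> direct_path W u m k}"
  have not_m: "k \<noteq> m" if "k \<in> R" for k
    using that direct_path_refl[of u m W] by (auto simp: R_def)
  have not_s: "k \<noteq> s" if "k \<in> R" for k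
    using that not_m[OF that] direct_path_refl[of m s W] by (auto simp: R_def)
  show ?thesis
  proof (rule max_principle_boundary[OF rs sc, of u R])
    fix k j
    assume "k \<in> R" "j \<notin> R" "0 < W $ k $ j"
    then have "edge W j k"
      by (simp add: edge_def)
    then have "j = u"
      using \<open>k \<in> R\<close> \<open>j \<notin> R\<close> not_m[OF \<open>k \<in> R\<close>] direct_path_snoc[of W _ _ j k]
      by (auto simp: R_def)
    then show "v $ j \<le> v $ u"
      by simp
  qed (use assms(4-6) sub not_s in \<open>auto simp: R_def\<close>)
qed

lemma harmonic_between_sources_le:
  fixes W :: "real^'n^'n" and v :: "real^'n"
  assumes rs: "row_stochastic W" and sc: "strongly_connected W"
    and sub: "\<And>k. k \<noteq> s \<Longrightarrow> v $ k \<le> (W *v v) $ k"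
    and super: "\<And>k. k \<noteq> t \<Longrightarrow> (W *v v) $ k \<le> v $ k"
    and "(a = s \<or> a \<noteq> t \<and> \<not> direct_path W m t a) \<and> (\<forall>xs. simple_path W m a xs \<longrightarrow> s \<in> set xs)
      \<or> a \<noteq> m \<and> \<not> direct_path W m t a \<and> (d = t \<or> d \<noteq> m \<and> \<not> direct_path W m s d)"
  shows "v $ d \<le> v $ a"
proof -
  have sub_neg: "(- v) $ k \<le> (W *v - v) $ k" if "k \<noteq> t" for k
    using super[OF that] by (simp add: vec.neg)
  have le_s: "v $ j \<le> v $ s" for j
    by (rule subharmonic_le_source[OF rs sc sub])
  have t_le: "v $ t \<le> v $ j" for j
    using subharmonic_le_source[OF rs sc sub_neg] by simp
  have cut_le: "v $ u \<le> v $ i" if "i \<noteq> u" "\<not> direct_path W m t i" "\<not> direct_path W u m i" for i u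
    using subharmonic_le_cut[OF rs sc sub_neg that] by simp
  from assms(5) consider (source) "a = s"
    | (shielded) "a \<noteq> t" "\<not> direct_path W m t a" "\<forall>xs. simple_path W m a xs \<longrightarrow> s \<in> set xs"
    | (cut) "a \<noteq> m" "\<not> direct_path W m t a" "d = t \<or> d \<noteq> m \<and> \<not> direct_path W m s d"
    by blast
  then show ?thesis
  proof cases
    case source
    then show ?thesis
      using le_s by simp
  next
    case shielded
    have "\<not> direct_path W s m a"
      using shielded(3) direct_path_imp_simple_path by blast
    then have "a \<noteq> s \<Longrightarrow> v $ s \<le> v $ a"
      using cut_le shielded(2) by blast
    then show ?thesis
      using le_s[of d] by (cases "a = s") auto
  next
    case cut
    have "v $ m \<le> v $ a"
      using cut_le cut(1,2) not_direct_path_from_avoided by blast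
    moreover have "v $ d \<le> v $ m \<or> d = t"
      using cut(3) subharmonic_le_cut[OF rs sc sub] not_direct_path_from_avoided by blast
    ultimately show ?thesis
      using t_le[of a] by auto
  qed
qed

section \<open>The Friedkin-Johnsen matrix\<close>

lemma matrix_inv_right: "invertible A \<Longrightarrow> A ** matrix_inv A = mat 1"
  unfolding invertible_def matrix_inv_def by (rule someI2_ex) auto

lemma matrix_vector_mult_column: "A *v column j B = column j (A ** B)"
  by (simp add: column_def matrix_vector_mult_def matrix_matrix_mult_def)

abbreviation fj_matrix :: "('n::finite \<Rightarrow> real) \<Rightarrow> real^'n^'n \<Rightarrow> real^'n^'n" where
  "fj_matrix \<beta> W \<equiv> mat 1 - (mat 1 - diagm \<beta>) ** W"

lemma diagm_mult_vec: "diagm \<beta> *v v = (\<chi> i. \<beta> i * v $ i)"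
  unfolding diagm_def matrix_vector_mult_def vec_eq_iff
  by (simp add: if_distrib[where f = "\<lambda>x. x * _"] sum.delta cong: if_cong)

lemma fj_matrix_mult_vec_nth: "(fj_matrix \<beta> W *v v) $ i = v $ i - (1 - \<beta> i) * (W *v v) $ i"
  by (simp add: matrix_vector_mult_diff_rdistrib matrix_vector_mul_assoc[symmetric] diagm_mult_vec
      algebra_simps)

lemma fj_min_principle:
  fixes W :: "real^'n^'n" and v :: "real^'n"
  assumes rs: "row_stochastic W" and sc: "strongly_connected W"
    and \<beta>: "\<forall>i. 0 \<le> \<beta> i \<and> \<beta> i \<le> 1" and "0 < \<beta> s"
    and nonneg: "\<And>i. 0 \<le> (fj_matrix \<beta> W *v v) $ i"
  shows "0 \<le> v $ i"
proof (rule ccontr)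
  assume "\<not> 0 \<le> v $ i"
  \<comment> \<open>At its positive maxima u is subharmonic, so u is constant; the damping at s forbids this.\<close>
  define u where "u = - v"
  obtain p where p: "\<And>j. u $ j \<le> u $ p"
    using obtain_vec_argmax[of u] by blast
  have pos: "0 < u $ p"
    using p[of i] \<open>\<not> 0 \<le> v $ i\<close> by (simp add: u_def)
  have u_le: "u $ k \<le> (1 - \<beta> k) * (W *v u) $ k" for k
    using nonneg[of k] by (simp add: u_def fj_matrix_mult_vec_nth vec.neg)
  have "u $ s = u $ p"
  proof (rule strong_max_principle[OF rs sc p])
    fix k
    assume "u $ k = u $ p"
    then have "0 < (1 - \<beta> k) * (W *v u) $ k"
      using u_le[of k] pos by simp
    then have "0 < (W *v u) $ k"
      using \<beta>[rule_format, of k] by (auto simp: zero_less_mult_iff)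
    then have "(1 - \<beta> k) * (W *v u) $ k \<le> (W *v u) $ k"
      using \<beta>[rule_format, of k] by (simp add: mult_left_le_one_le)
    then show "u $ k \<le> (W *v u) $ k"
      using u_le[of k] by (rule order_trans[rotated])
  qed
  moreover have "u $ s < u $ p"
  proof -
    have "(1 - \<beta> s) * (W *v u) $ s \<le> (1 - \<beta> s) * u $ p"
      using \<beta>[rule_format, of s] row_stochastic_mult_vec_le[OF rs p] by (intro mult_left_mono) simp_all
    also have "\<dots> < u $ p"
      using pos \<open>0 < \<beta> s\<close> by (simp add: algebra_simps)
    finally show ?thesis
      using u_le[of s] by simp
  qed
  ultimately show False
    by simp
qed

lemma invertible_fj_matrix:
  fixes W :: "real^'n^'n"
  assumes "row_stochastic W" and "strongly_connected W"
    and "\<forall>i. 0 \<le> \<beta> i \<and> \<beta> i \<le> 1" and "0 < \<beta> s"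
  shows "invertible (fj_matrix \<beta> W)"
  unfolding invertible_left_inverse matrix_left_invertible_ker
proof (intro allI impI)
  fix v :: "real^'n"
  assume v: "fj_matrix \<beta> W *v v = 0"
  have "0 \<le> v $ i" for i
    by (rule fj_min_principle[OF assms]) (simp only: v zero_index order_refl)
  moreover have "0 \<le> (- v) $ i" for i
    by (rule fj_min_principle[OF assms]) (simp only: vec.neg v minus_zero zero_index order_refl)
  ultimately show "v = 0"
    by (simp add: vec_eq_iff order_antisym)
qed

lemma fj_matrix_mult_column_FJ_P:
  assumes "invertible (fj_matrix \<beta> W)"
  shows "fj_matrix \<beta> W *v column c (FJ_P \<beta> W) = (\<chi> i. if i = c then \<beta> c else 0)"
proof -
  have "fj_matrix \<beta> W ** FJ_P \<beta> W = diagm \<beta>"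
    unfolding FJ_P_def by (simp add: matrix_mul_assoc matrix_inv_right[OF assms])
  then have "fj_matrix \<beta> W *v column c (FJ_P \<beta> W) = column c (diagm \<beta>)"
    unfolding matrix_vector_mult_column by simp
  then show ?thesis
    by (auto simp: column_def diagm_def vec_eq_iff)
qed

lemma FJ_P_column_subharmonic:
  fixes W :: "real^'n^'n"
  assumes rs: "row_stochastic W" and "strongly_connected W"
    and \<beta>: "\<forall>i. 0 \<le> \<beta> i \<and> \<beta> i \<le> 1" and "0 < \<beta> s" and "k \<noteq> c"
  shows "column c (FJ_P \<beta> W) $ k \<le> (W *v column c (FJ_P \<beta> W)) $ k"
proof -
  define x where "x = column c (FJ_P \<beta> W)"
  have Mx: "fj_matrix \<beta> W *v x = (\<chi> i. if i = c then \<beta> c else 0)"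
    unfolding x_def by (rule fj_matrix_mult_column_FJ_P[OF invertible_fj_matrix[OF assms(1-4)]])
  have "0 \<le> x $ j" for j
    by (rule fj_min_principle[OF assms(1-4)]) (use \<beta> in \<open>simp add: Mx\<close>)
  then have "0 \<le> (W *v x) $ k"
    using nonneg_mult_vec_mono[of W k 0 x] by (simp add: row_stochastic_nonneg[OF rs])
  moreover have "x $ k = (1 - \<beta> k) * (W *v x) $ k"
    using arg_cong[OF Mx, of "\<lambda>v. v $ k"] \<open>k \<noteq> c\<close> unfolding fj_matrix_mult_vec_nth by simp
  ultimately show ?thesis
    using \<beta>[rule_format, of k] by (simp add: x_def mult_left_le_one_le)
qed

section \<open>Edge modifications\<close>

lemma modify_mult_vec_nth:
  assumes "a \<noteq> d"
  shows "(modify W a b d w *v v) $ i = (W *v v) $ i + (if i = b then w * (v $ a - v $ d) else 0)"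
proof -
  have "(modify W a b d w *v v) $ i
      = (\<Sum>j\<in>UNIV. W $ i $ j * v $ j
           + (if i = b then (if j = a then w * v $ j else 0) - (if j = d then w * v $ j else 0) else 0))"
    unfolding matrix_vector_mult_def by (rule vec_lambda_beta[THEN trans], rule sum.cong)
      (use assms in \<open>auto simp: modify_def algebra_simps\<close>)
  also have "\<dots> = (W *v v) $ i + (if i = b then w * (v $ a - v $ d) else 0)"
    by (cases "i = b")
      (simp_all add: matrix_vector_mult_def sum.distrib sum_subtractf sum.delta' right_diff_distrib)
  finally show ?thesis .
qed

lemma row_stochastic_modify:
  assumes rs: "row_stochastic W" and "a \<noteq> d" and "0 \<le> w" and "w \<le> W $ b $ d"
  shows "row_stochastic (modify W a b d w)"
  unfolding row_stochastic_def
proof (intro conjI allI)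
  fix i j
  show "0 \<le> modify W a b d w $ i $ j"
    using assms by (auto simp: modify_def row_stochastic_nonneg)
next
  fix i
  have "(\<Sum>j\<in>UNIV. modify W a b d w $ i $ j) = (modify W a b d w *v 1) $ i"
    by (simp add: matrix_vector_mult_def)
  also have "\<dots> = 1"
    using row_stochastic_mult_vec_const[OF rs, of 1]
    by (simp add: modify_mult_vec_nth[OF \<open>a \<noteq> d\<close>] vec_eq_iff)
  finally show "(\<Sum>j\<in>UNIV. modify W a b d w $ i $ j) = 1" .
qed

lemma fj_matrix_modify_mult_vec:
  assumes "a \<noteq> d"
  shows "fj_matrix \<beta> (modify W a b d w) *v v
    = fj_matrix \<beta> W *v v - ((1 - \<beta> b) * w * (v $ a - v $ d)) *s axis b 1"
  unfolding vec_eq_iff vector_minus_component fj_matrix_mult_vec_nth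
  by (simp add: modify_mult_vec_nth[OF assms] axis_def algebra_simps)

lemma fj_point_source_nonneg:
  fixes W :: "real^'n^'n"
  assumes rs: "row_stochastic W" and "strongly_connected W"
    and \<beta>: "\<forall>i. 0 \<le> \<beta> i \<and> \<beta> i \<le> 1" and "0 < \<beta> s"
    and v: "fj_matrix \<beta> W *v v = K *s axis b 1" and "0 \<le> K"
  shows "0 \<le> v $ i" and "K \<le> v $ b"
proof -
  have nonneg: "0 \<le> v $ j" for j
    by (rule fj_min_principle[OF assms(1-4)]) (use \<open>0 \<le> K\<close> in \<open>simp add: v axis_def\<close>)
  then show "0 \<le> v $ i" .
  have "0 \<le> (W *v v) $ b"
    using nonneg_mult_vec_mono[of W b 0 v] nonneg by (simp add: row_stochastic_nonneg[OF rs])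
  then have "0 \<le> (1 - \<beta> b) * (W *v v) $ b"
    using \<beta>[rule_format, of b] by simp
  moreover have "v $ b - (1 - \<beta> b) * (W *v v) $ b = K"
    using arg_cong[OF v, of "\<lambda>u. u $ b"] unfolding fj_matrix_mult_vec_nth by simp
  ultimately show "K \<le> v $ b"
    by linarith
qed

lemma influence_centrality_eq_column_sum:
  "influence_centrality \<beta> W c = sum (($) (column c (FJ_P \<beta> W))) UNIV / CARD('n)"
  for W :: "real^'n::finite^'n"
  by (simp add: influence_centrality_def column_def)

lemma FJ_P_column_modify:
  fixes W :: "real^'n^'n"
  assumes "invertible (fj_matrix \<beta> W)" and "invertible (fj_matrix \<beta> (modify W a b d w))"
    and "a \<noteq> d"
  shows "fj_matrix \<beta> (modify W a b d w) *v (column c (FJ_P \<beta> (modify W a b d w)) - column c (FJ_P \<beta> W))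
    = ((1 - \<beta> b) * w * (column c (FJ_P \<beta> W) $ a - column c (FJ_P \<beta> W) $ d)) *s axis b 1"
proof -
  have "fj_matrix \<beta> (modify W a b d w) *v column c (FJ_P \<beta> (modify W a b d w))
      = fj_matrix \<beta> W *v column c (FJ_P \<beta> W)"
    unfolding fj_matrix_mult_column_FJ_P[OF assms(1)] fj_matrix_mult_column_FJ_P[OF assms(2)] ..
  then show ?thesis
    unfolding matrix_vector_mult_diff_distrib fj_matrix_modify_mult_vec[OF assms(3)] by simp
qed

lemma influence_centrality_modify:
  fixes W :: "real^'n^'n" and \<beta> :: "'n \<Rightarrow> real" and c :: 'n
  defines "x \<equiv> column c (FJ_P \<beta> W)"
  assumes rs: "row_stochastic W" and sc: "strongly_connected W"
    and sc': "strongly_connected (modify W a b d w)"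
    and \<beta>: "\<forall>i. 0 \<le> \<beta> i \<and> \<beta> i \<le> 1" and "0 < \<beta> s" and "\<beta> b < 1"
    and "a \<noteq> d" and "0 < w" and "w \<le> W $ b $ d"
  shows "x $ d < x $ a \<Longrightarrow> influence_centrality \<beta> W c < influence_centrality \<beta> (modify W a b d w) c"
    and "x $ a = x $ d \<Longrightarrow> influence_centrality \<beta> (modify W a b d w) c = influence_centrality \<beta> W c"
proof -
  define W' where "W' = modify W a b d w"
  define x' where "x' = column c (FJ_P \<beta> W')"
  have rs': "row_stochastic W'"
    unfolding W'_def by (rule row_stochastic_modify) (use assms in auto)
  have inv: "invertible (fj_matrix \<beta> W)" and inv': "invertible (fj_matrix \<beta> W')"
    using invertible_fj_matrix \<open>0 < \<beta> s\<close> rs rs' sc sc' \<beta> by (auto simp: W'_def)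
  have diff: "fj_matrix \<beta> W' *v (x' - x) = ((1 - \<beta> b) * w * (x $ a - x $ d)) *s axis b 1"
    using FJ_P_column_modify[OF inv inv'[unfolded W'_def] \<open>a \<noteq> d\<close>] by (simp add: x_def x'_def W'_def)
  show "x $ d < x $ a \<Longrightarrow> influence_centrality \<beta> W c < influence_centrality \<beta> (modify W a b d w) c"
  proof -
    assume "x $ d < x $ a"
    then have "0 < (1 - \<beta> b) * w * (x $ a - x $ d)"
      using \<open>\<beta> b < 1\<close> \<open>0 < w\<close> by simp
    then have "0 \<le> (x' - x) $ j" and "0 < (x' - x) $ b" for j
      using fj_point_source_nonneg[OF rs' sc'[folded W'_def] \<beta> \<open>0 < \<beta> s\<close> diff] by fastforce+
    then have "sum (($) x) UNIV < sum (($) x') UNIV"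
      by (intro sum_strict_mono_ex1) auto
    then show ?thesis
      by (simp add: influence_centrality_eq_column_sum x_def x'_def W'_def divide_strict_right_mono)
  qed
  show "x $ a = x $ d \<Longrightarrow> influence_centrality \<beta> (modify W a b d w) c = influence_centrality \<beta> W c"
  proof -
    assume "x $ a = x $ d"
    then have "fj_matrix \<beta> W' *v (x' - x) = fj_matrix \<beta> W' *v 0"
      using diff by simp
    then have "x' - x = 0"
      using injD[OF inj_matrix_vector_mult[OF inv']] by blast
    then have "x' = x"
      by simp
    then show ?thesis
      by (simp add: influence_centrality_eq_column_sum x_def x'_def W'_def)
  qed
qed

section \<open>Two stubborn agents\<close>

lemma tclass_eq_1:
  "tclass W m s1 s2 j = 1 \<Longrightarrow> j = s1 \<or> j \<noteq> m \<and> j \<noteq> s2 \<and> \<not> direct_path W m s2 j"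
  unfolding tclass_def by (auto split: if_splits)

lemma tclass_eq_2:
  "tclass W m s1 s2 j = 2 \<Longrightarrow> j = s2 \<or> j \<noteq> m \<and> j \<noteq> s1 \<and> \<not> direct_path W m s1 j"
  unfolding tclass_def by (auto split: if_splits)

lemma tclass_eq_4:
  "tclass W m s1 s2 j = 4 \<Longrightarrow> j \<noteq> m \<and> \<not> direct_path W m s1 j \<and> \<not> direct_path W m s2 j"
  unfolding tclass_def by (auto split: if_splits)

locale two_stubborn =
  fixes W :: "real^'n::finite^'n" and \<beta> :: "'n \<Rightarrow> real" and s t :: 'n
  assumes stochastic: "row_stochastic W" and connected: "strongly_connected W"
    and beta_range: "\<forall>i. 0 \<le> \<beta> i \<and> \<beta> i \<le> 1"
    and stubborn_s: "0 < \<beta> s \<and> \<beta> s < 1" and stubborn_t: "0 < \<beta> t \<and> \<beta> t < 1"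
    and s_neq_t: "s \<noteq> t"
    and beta_others: "\<forall>i. i \<noteq> s \<and> i \<noteq> t \<longrightarrow> \<beta> i = 0"
begin

lemma beta_less_1: "\<beta> k < 1"
  using stubborn_s stubborn_t beta_others by (cases "k = s \<or> k = t") auto

lemma fj_matrix_invertible: "invertible (fj_matrix \<beta> W)"
  using invertible_fj_matrix stochastic connected beta_range stubborn_s by blast

lemma columns_sum: "column s (FJ_P \<beta> W) + column t (FJ_P \<beta> W) = 1"
proof -
  have "fj_matrix \<beta> W *v (column s (FJ_P \<beta> W) + column t (FJ_P \<beta> W))
      = (\<chi> i. if i = s then \<beta> s else 0) + (\<chi> i. if i = t then \<beta> t else 0)"
    by (simp only: matrix_vector_right_distrib fj_matrix_mult_column_FJ_P[OF fj_matrix_invertible])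
  also have "\<dots> = (\<chi> i. \<beta> i)"
    using beta_others s_neq_t by (auto simp: vec_eq_iff)
  also have "\<dots> = fj_matrix \<beta> W *v 1"
    using row_stochastic_mult_vec_const[OF stochastic, of 1]
    unfolding vec_eq_iff fj_matrix_mult_vec_nth by (simp add: vec_eq_iff)
  finally show ?thesis
    using inj_matrix_vector_mult[OF fj_matrix_invertible] by (simp add: inj_eq)
qed

lemma column_superharmonic:
  assumes "k \<noteq> t"
  shows "(W *v column s (FJ_P \<beta> W)) $ k \<le> column s (FJ_P \<beta> W) $ k"
proof -
  have "W *v 1 = 1"
    using row_stochastic_mult_vec_const[OF stochastic, of 1] by simp
  moreover have "column t (FJ_P \<beta> W) = 1 - column s (FJ_P \<beta> W)"
    using columns_sum by (simp add: algebra_simps)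
  moreover have "column t (FJ_P \<beta> W) $ k \<le> (W *v column t (FJ_P \<beta> W)) $ k"
    using FJ_P_column_subharmonic stochastic connected beta_range stubborn_s assms by blast
  ultimately show ?thesis
    by (simp add: matrix_vector_mult_diff_distrib)
qed

lemma influence_centrality_increase:
  assumes connected': "strongly_connected (modify W a b d w)"
    and "a \<noteq> d" and "0 < w" and "w \<le> W $ b $ d"
    and nonredundant: "influence_centrality \<beta> (modify W a b d w) s \<noteq> influence_centrality \<beta> W s
      \<or> influence_centrality \<beta> (modify W a b d w) t \<noteq> influence_centrality \<beta> W t"
    and "(a = s \<or> a \<noteq> t \<and> \<not> direct_path W m t a) \<and> (\<forall>xs. simple_path W m a xs \<longrightarrow> s \<in> set xs)
      \<or> a \<noteq> m \<and> \<not> direct_path W m t a \<and> (d = t \<or> d \<noteq> m \<and> \<not> direct_path W m s d)"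
  shows "influence_centrality \<beta> W s < influence_centrality \<beta> (modify W a b d w) s"
proof -
  let ?x = "column s (FJ_P \<beta> W)" and ?y = "column t (FJ_P \<beta> W)"
  note modify = influence_centrality_modify[OF stochastic connected connected' beta_range
      conjunct1[OF stubborn_s] beta_less_1 assms(2-4)]
  have "?x $ d \<le> ?x $ a"
    using FJ_P_column_subharmonic stochastic connected beta_range stubborn_s column_superharmonic assms(6)
    by (intro harmonic_between_sources_le[OF stochastic connected]) blast+
  moreover have "?x $ a \<noteq> ?x $ d"
  proof
    assume "?x $ a = ?x $ d"
    moreover from this have "?y $ a = ?y $ d"
      using columns_sum by (simp add: vec_eq_iff) (metis add_left_cancel)
    ultimately show False
      using nonredundant modify(2) by metis
  qed
  ultimately show ?thesis
    using modify(1) by simp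
qed

end

theorem theorem2:
  fixes W :: "real^'n^'n" and \<beta> :: "'n \<Rightarrow> real"
    and s1 s2 m a b d :: 'n and w :: real
  assumes stoch: "row_stochastic W"
    and C1: "type_C1 W"
    and gc: "global_communicator W m"
    and s12: "s1 \<noteq> s2"
    and beta_range: "\<forall>i. 0 \<le> \<beta> i \<and> \<beta> i \<le> 1"
    and beta_s1: "0 < \<beta> s1 \<and> \<beta> s1 < 1"
    and beta_s2: "0 < \<beta> s2 \<and> \<beta> s2 < 1"
    and beta_others: "\<forall>i. i \<noteq> s1 \<and> i \<noteq> s2 \<longrightarrow> \<beta> i = 0"
    and distinct_abd: "a \<noteq> b" "b \<noteq> d" "a \<noteq> d"
    and wbd: "W $ b $ d > 0"
    and w_range: "0 < w" "w < W $ b $ d"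
    and permissible: "type_C1 (modify W a b d w)"
    and nonredundant: "influence_centrality \<beta> (modify W a b d w) s1 \<noteq> influence_centrality \<beta> W s1
                       \<or> influence_centrality \<beta> (modify W a b d w) s2 \<noteq> influence_centrality \<beta> W s2"
  shows
    "(((tclass W m s1 s2 a = 1 \<and> (\<forall>xs. simple_path W m a xs \<longrightarrow> s1 \<in> set xs))
        \<and> \<not> (tclass W m s1 s2 d = 1 \<and> (\<forall>xs. simple_path W m d xs \<longrightarrow> s1 \<in> set xs)))
      \<or> (tclass W m s1 s2 a = 4 \<and> tclass W m s1 s2 d = 2)
      \<longrightarrow> influence_centrality \<beta> (modify W a b d w) s1 > influence_centrality \<beta> W s1)
   \<and> (((tclass W m s1 s2 a = 2 \<and> (\<forall>xs. simple_path W m a xs \<longrightarrow> s2 \<in> set xs))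
        \<and> \<not> (tclass W m s1 s2 d = 2 \<and> (\<forall>xs. simple_path W m d xs \<longrightarrow> s2 \<in> set xs)))
      \<or> (tclass W m s1 s2 a = 4 \<and> tclass W m s1 s2 d = 1)
      \<longrightarrow> influence_centrality \<beta> (modify W a b d w) s2 > influence_centrality \<beta> W s2)"
proof -
  have connected: "strongly_connected W" and connected': "strongly_connected (modify W a b d w)"
    using C1 permissible by (simp_all add: type_C1_def)
  interpret s1: two_stubborn W \<beta> s1 s2
    using stoch connected beta_range beta_s1 beta_s2 s12 beta_others by unfold_locales
  interpret s2: two_stubborn W \<beta> s2 s1
    using stoch connected beta_range beta_s1 beta_s2 s12 beta_others by unfold_locales auto
  note modification = distinct_abd(3) w_range(1) less_imp_le[OF w_range(2)]
  have s2_nonredundant: "influence_centrality \<beta> (modify W a b d w) s2 \<noteq> influence_centrality \<beta> W s2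
      \<or> influence_centrality \<beta> (modify W a b d w) s1 \<noteq> influence_centrality \<beta> W s1"
    using nonredundant by blast
  show ?thesis
    using tclass_eq_1[of W m s1 s2] tclass_eq_2[of W m s1 s2] tclass_eq_4[of W m s1 s2]
    by (intro conjI impI s1.influence_centrality_increase[OF connected' modification nonredundant]
        s2.influence_centrality_increase[OF connected' modification s2_nonredundant]) blast+
qed

end
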